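(* Let $p > 3$ be a prime and let $n \in \mathbb{N}$ with $n \ge 2^{18} \log p$. Set $m := \lfloor 2^{12} \log p \rfloor$. Let $v \in \mathbb{Z}_p^n$. There exists $U \subset [n]$ with $|U| \le m$ such that $$|T_{8\ell}(v)| \le 2\, |F(v_U)| \qquad \text{and} \qquad F(v_U) \subset T_t(v),$$ where $\ell := 2^{-16} |v|$ and $t := 2^{-7} n$.
   Context: $\log$ is the natural logarithm. For $w \in \mathbb{Z}_p^r$, $|w|$ is the number of nonzero coordinates, and for $s \ge 0$ $$T_s(w) := \Big\{ k \in \mathbb{Z}_p : \sum_{i=1}^r \Big\| \frac{k \cdot w_i}{p} \Big\|^2 \le s \Big\}, \qquad F(w) := T_{\log p}(w),$$ where $k \cdot w_i \in \mathbb{Z}$ is the product of the representatives of $k$ and $w_i$ in $\{0,\ldots,p-1\}$, and $\|x\|$ is the distance from $x$ to the nearest integer. For $U \subset [n]$, $v_U \in \mathbb{Z}_p^{|U|}$ is the restriction of $v$ to the coordinates in $U$. *)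

theory Defs
  imports "HOL-Analysis.Analysis"
begin

definition near_dist :: "real \<Rightarrow> real" where
  "near_dist x = \<bar>x - of_int (round x)\<bar>"

text \<open>Vectors in Z_p^n are modelled as functions v :: nat => nat with coordinates
  indexed by a finite set I (for v in Z_p^n, I = {1..n}; for v_U, I = U), each value
  being the representative in {0..p-1}.\<close>
definition Tset :: "nat \<Rightarrow> nat set \<Rightarrow> (nat \<Rightarrow> nat) \<Rightarrow> real \<Rightarrow> nat set" where
  "Tset p I v s = {k \<in> {..<p}. (\<Sum>i\<in>I. (near_dist (real (k * v i) / real p))\<^sup>2) \<le> s}"

definition Fset :: "nat \<Rightarrow> nat set \<Rightarrow> (nat \<Rightarrow> nat) \<Rightarrow> nat set" where
  "Fset p I v = Tset p I v (ln (real p))"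

definition supp_size :: "nat \<Rightarrow> nat set \<Rightarrow> (nat \<Rightarrow> nat) \<Rightarrow> nat" where
  "supp_size p I v = card {i \<in> I. v i mod p \<noteq> 0}"

end

theory Submission
  imports Defs
begin

(* Pick U at random, each index independently with probability q = M / (2 n).  Exponential
   moment bounds show: |U| > M with probability at most 1/8; each of the at most p = exp (log p)
   frequencies k with sum_i ||k v_i / p||^2 > n / 2^7 is spurious, i.e. lies in F(v_U), with
   probability at most e^(1/128) p^(-28), so the expected number of spurious k is at most 1/8;
   and each k in T_(n/2^13), a superset of T_(8 l), is lost from F(v_U) with probability at most
   e^(-2) < 1/3.  Weighting the number of lost k by 2 / |T_(n/2^13)|, the three failure counts
   have total expectation below 1, so some U is small, has no spurious k and loses less than
   half of T_(n/2^13). *)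

lemma exp_minus_le_inverse_one_plus:
  fixes x :: real
  assumes "0 \<le> x"
  shows "exp (- x) \<le> 1 / (1 + x)"
  using exp_ge_add_one_self[of x] assms by (simp add: exp_minus field_simps)

lemma exp_minus_le_one_minus_half:
  fixes x :: real
  assumes "0 \<le> x" "x \<le> 1"
  shows "exp (- x) \<le> 1 - x / 2"
proof -
  have "1 \<le> (1 - x / 2) * (1 + x)"
    using mult_right_mono[OF assms(2,1)] by (simp add: algebra_simps)
  then have "1 / (1 + x) \<le> 1 - x / 2" using assms by (simp add: divide_le_eq)
  then show ?thesis using exp_minus_le_inverse_one_plus[OF assms(1)] by linarith
qed

lemma exp_le_one_plus_double:
  fixes x :: real
  assumes "0 \<le> x" "x \<le> 1"
  shows "exp x \<le> 1 + 2 * x"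
proof -
  have "x ^ 2 \<le> x" using assms by (simp add: power2_eq_square mult_left_le_one_le)
  then show ?thesis using exp_bound[OF assms] by simp
qed

lemma near_dist_le_half: "near_dist x \<le> 1 / 2"
  using of_int_round_abs_le[of x] by (simp add: near_dist_def abs_minus_commute)

lemma ln_ge_1_of_gt_3: "3 < p \<Longrightarrow> 1 \<le> ln (real p)"
  using exp_le by (subst ln_ge_iff) auto

definition subset_prob :: "real \<Rightarrow> 'a set \<Rightarrow> 'a set \<Rightarrow> real" where
  "subset_prob q A U = q ^ card U * (1 - q) ^ card (A - U)"

definition subset_expect :: "real \<Rightarrow> 'a set \<Rightarrow> ('a set \<Rightarrow> real) \<Rightarrow> real" where
  "subset_expect q A h = (\<Sum>U\<in>Pow A. subset_prob q A U * h U)"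

lemma subset_prob_nonneg: "0 \<le> q \<Longrightarrow> q \<le> 1 \<Longrightarrow> 0 \<le> subset_prob q A U"
  by (simp add: subset_prob_def)

lemma subset_expect_cong:
  "(\<And>U. U \<subseteq> A \<Longrightarrow> h U = h' U) \<Longrightarrow> subset_expect q A h = subset_expect q A h'"
  unfolding subset_expect_def by (intro sum.cong) auto

lemma subset_expect_mono:
  assumes "0 \<le> q" "q \<le> 1" "\<And>U. U \<subseteq> A \<Longrightarrow> h U \<le> h' U"
  shows "subset_expect q A h \<le> subset_expect q A h'"
  unfolding subset_expect_def
  by (intro sum_mono mult_left_mono subset_prob_nonneg) (use assms in auto)

lemma subset_expect_add:
  "subset_expect q A (\<lambda>U. h U + h' U) = subset_expect q A h + subset_expect q A h'"
  by (simp add: subset_expect_def distrib_left sum.distrib)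

lemma subset_expect_cmult: "subset_expect q A (\<lambda>U. c * h U) = c * subset_expect q A h"
  by (simp add: subset_expect_def sum_distrib_left mult.left_commute)

lemma subset_expect_exp_sum:
  fixes g :: "'a \<Rightarrow> real"
  assumes "finite A"
  shows "subset_expect q A (\<lambda>U. exp (\<Sum>i\<in>U. g i)) = (\<Prod>i\<in>A. 1 - q + q * exp (g i))"
proof -
  have "(\<Prod>i\<in>A. 1 - q + q * exp (g i)) = (\<Prod>i\<in>A. q * exp (g i) + (1 - q))"
    by (simp add: algebra_simps)
  also have "\<dots> = (\<Sum>U\<in>Pow A. (\<Prod>i\<in>U. q * exp (g i)) * (\<Prod>i\<in>A - U. 1 - q))"
    by (rule prod_add[OF assms])
  also have "\<dots> = subset_expect q A (\<lambda>U. exp (\<Sum>i\<in>U. g i))"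
    unfolding subset_expect_def
  proof (rule sum.cong[OF refl])
    fix U assume "U \<in> Pow A"
    then have "finite U" using assms finite_subset by auto
    then show "(\<Prod>i\<in>U. q * exp (g i)) * (\<Prod>i\<in>A - U. 1 - q) = subset_prob q A U * exp (\<Sum>i\<in>U. g i)"
      by (simp add: subset_prob_def prod.distrib exp_sum)
  qed
  finally show ?thesis by simp
qed

lemma subset_expect_const: "finite A \<Longrightarrow> subset_expect q A (\<lambda>_. c) = c"
  using subset_expect_exp_sum[of A q "\<lambda>_. 0"] subset_expect_cmult[of q A c "\<lambda>_. 1"] by simp

lemma subset_expect_card:
  assumes "finite K" "\<And>U. U \<subseteq> A \<Longrightarrow> S U \<subseteq> K"
  shows "subset_expect q A (\<lambda>U. real (card (S U))) = (\<Sum>k\<in>K. subset_expect q A (\<lambda>U. of_bool (k \<in> S U)))"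
proof -
  have "real (card (S U)) = (\<Sum>k\<in>K. of_bool (k \<in> S U))" if "U \<subseteq> A" for U
    using assms that by (simp add: Int_absorb1 Int_def[symmetric])
  then have "subset_expect q A (\<lambda>U. real (card (S U))) = subset_expect q A (\<lambda>U. \<Sum>k\<in>K. of_bool (k \<in> S U))"
    by (rule subset_expect_cong)
  then show ?thesis
    by (simp add: subset_expect_def sum_distrib_left sum.swap[of _ K])
qed

lemma exists_subset_lt_of_subset_expect_lt:
  assumes "finite A" "0 \<le> q" "q \<le> 1" "subset_expect q A h < c"
  shows "\<exists>U\<subseteq>A. h U < c"
proof (rule ccontr)
  assume "\<not> ?thesis"
  then have "subset_expect q A (\<lambda>_. c) \<le> subset_expect q A h"
    by (intro subset_expect_mono) (use assms in auto)
  then show False using assms subset_expect_const[of A q c] by simp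
qed

lemma subset_expect_exp_sum_le:
  fixes g :: "'a \<Rightarrow> real"
  assumes "finite A" "0 \<le> q" "q \<le> 1"
  shows "subset_expect q A (\<lambda>U. exp (\<Sum>i\<in>U. g i)) \<le> exp (q * (\<Sum>i\<in>A. exp (g i) - 1))"
proof -
  have "(\<Prod>i\<in>A. 1 - q + q * exp (g i)) \<le> (\<Prod>i\<in>A. exp (q * (exp (g i) - 1)))"
  proof (rule prod_mono)
    fix i
    have "1 + q * (exp (g i) - 1) \<le> exp (q * (exp (g i) - 1))" by (rule exp_ge_add_one_self)
    moreover have "1 - q + q * exp (g i) = 1 + q * (exp (g i) - 1)" by (simp add: algebra_simps)
    moreover have "0 \<le> q * exp (g i)" using assms by simp
    ultimately show "0 \<le> 1 - q + q * exp (g i) \<and> 1 - q + q * exp (g i) \<le> exp (q * (exp (g i) - 1))"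
      using assms by linarith
  qed
  then show ?thesis
    using assms(1) by (simp add: subset_expect_exp_sum exp_sum sum_distrib_left)
qed

lemma subset_expect_le_exp_moment:
  fixes g d :: "'a \<Rightarrow> real"
  assumes "finite A" "0 \<le> q" "q \<le> 1" "0 \<le> c"
    and "\<And>U. U \<subseteq> A \<Longrightarrow> h U \<le> c * exp (\<Sum>i\<in>U. g i)"
    and "\<And>i. i \<in> A \<Longrightarrow> exp (g i) - 1 \<le> d i"
  shows "subset_expect q A h \<le> c * exp (q * (\<Sum>i\<in>A. d i))"
proof -
  have "subset_expect q A h \<le> c * subset_expect q A (\<lambda>U. exp (\<Sum>i\<in>U. g i))"
    using subset_expect_mono[OF assms(2,3,5)] by (simp add: subset_expect_cmult)
  also have "\<dots> \<le> c * exp (q * (\<Sum>i\<in>A. exp (g i) - 1))"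
    by (intro mult_left_mono subset_expect_exp_sum_le) (use assms in auto)
  also have "\<dots> \<le> c * exp (q * (\<Sum>i\<in>A. d i))"
    by (intro mult_left_mono exp_mono sum_mono) (use assms in auto)
  finally show ?thesis .
qed

lemma subset_expect_card_gt_le:
  assumes "finite A" "0 \<le> q" "q \<le> 1"
  shows "subset_expect q A (\<lambda>U. of_bool (M < real (card U))) \<le> exp (3 / 4 * q * real (card A) - M / 2)"
proof -
  have "subset_expect q A (\<lambda>U. of_bool (M < real (card U))) \<le> exp (- M / 2) * exp (q * (\<Sum>i\<in>A. 3 / 4))"
  proof (rule subset_expect_le_exp_moment[OF assms, where g = "\<lambda>_. 1 / 2"])
    fix U
    have "of_bool (M < real (card U)) \<le> exp ((real (card U) - M) / 2)" by auto
    then show "of_bool (M < real (card U)) \<le> exp (- M / 2) * exp (\<Sum>i\<in>U. 1 / 2)"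
      by (simp add: mult_exp_exp diff_divide_distrib)
  next
    show "exp (1 / 2) - 1 \<le> (3 / 4 :: real)"
      using exp_bound[of "1 / 2 :: real"] by (simp add: power2_eq_square)
  qed simp
  then show ?thesis by (simp add: mult_exp_exp algebra_simps)
qed

lemma subset_expect_sum_le_tail:
  fixes f :: "'a \<Rightarrow> real"
  assumes "finite A" "0 \<le> q" "q \<le> 1" "\<And>i. i \<in> A \<Longrightarrow> 0 \<le> f i \<and> f i \<le> 1 / 4"
  shows "subset_expect q A (\<lambda>U. of_bool ((\<Sum>i\<in>U. f i) \<le> L)) \<le> exp (4 * L - 2 * q * (\<Sum>i\<in>A. f i))"
proof -
  have "subset_expect q A (\<lambda>U. of_bool ((\<Sum>i\<in>U. f i) \<le> L)) \<le> exp (4 * L) * exp (q * (\<Sum>i\<in>A. - 2 * f i))"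
  proof (rule subset_expect_le_exp_moment[OF assms(1-3), where g = "\<lambda>i. - 4 * f i"])
    fix U
    have "of_bool ((\<Sum>i\<in>U. f i) \<le> L) \<le> exp (4 * L - 4 * (\<Sum>i\<in>U. f i))" by auto
    then show "of_bool ((\<Sum>i\<in>U. f i) \<le> L) \<le> exp (4 * L) * exp (\<Sum>i\<in>U. - 4 * f i)"
      by (simp add: mult_exp_exp sum_distrib_left sum_negf)
  next
    fix i assume "i \<in> A"
    then show "exp (- 4 * f i) - 1 \<le> - 2 * f i"
      using exp_minus_le_one_minus_half[of "4 * f i"] assms(4)[of i] by simp
  qed simp
  then show ?thesis by (simp add: mult_exp_exp sum_distrib_left[symmetric] sum_negf) (simp only: mult_ac)
qed

lemma subset_expect_sum_gt_tail:
  fixes f :: "'a \<Rightarrow> real"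
  assumes "finite A" "0 \<le> q" "q \<le> 1" "\<And>i. i \<in> A \<Longrightarrow> 0 \<le> f i \<and> f i \<le> 1 / 4"
  shows "subset_expect q A (\<lambda>U. of_bool (L < (\<Sum>i\<in>U. f i))) \<le> exp (8 * q * (\<Sum>i\<in>A. f i) - 4 * L)"
proof -
  have "subset_expect q A (\<lambda>U. of_bool (L < (\<Sum>i\<in>U. f i))) \<le> exp (- 4 * L) * exp (q * (\<Sum>i\<in>A. 8 * f i))"
  proof (rule subset_expect_le_exp_moment[OF assms(1-3), where g = "\<lambda>i. 4 * f i"])
    fix U
    have "of_bool (L < (\<Sum>i\<in>U. f i)) \<le> exp (- 4 * L + 4 * (\<Sum>i\<in>U. f i))" by auto
    then show "of_bool (L < (\<Sum>i\<in>U. f i)) \<le> exp (- 4 * L) * exp (\<Sum>i\<in>U. 4 * f i)"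
      by (simp add: mult_exp_exp sum_distrib_left)
  next
    fix i assume "i \<in> A"
    then show "exp (4 * f i) - 1 \<le> 8 * f i"
      using exp_le_one_plus_double[of "4 * f i"] assms(4)[of i] by simp
  qed simp
  then show ?thesis by (simp add: mult_exp_exp sum_distrib_left[symmetric]) (simp only: mult_ac)
qed

definition sum_sublevel :: "'k set \<Rightarrow> ('k \<Rightarrow> 'a \<Rightarrow> real) \<Rightarrow> 'a set \<Rightarrow> real \<Rightarrow> 'k set" where
  "sum_sublevel K f I s = {k \<in> K. (\<Sum>i\<in>I. f k i) \<le> s}"

lemma sum_sublevel_subset: "sum_sublevel K f I s \<subseteq> K"
  by (auto simp: sum_sublevel_def)

lemma sum_sublevel_mono: "s \<le> t \<Longrightarrow> sum_sublevel K f I s \<subseteq> sum_sublevel K f I t"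
  by (auto simp: sum_sublevel_def)

locale sparsification =
  fixes A :: "'a set" and K :: "'k set" and f :: "'k \<Rightarrow> 'a \<Rightarrow> real" and L M :: real
  assumes finite_A: "finite A" and finite_K: "finite K"
    and L_ge_1: "1 \<le> L" and card_K_le: "real (card K) \<le> exp L"
    and card_A_ge: "2 ^ 18 * L \<le> real (card A)"
    and M_ge: "2 ^ 12 * L - 1 \<le> M" and M_le: "M \<le> 2 ^ 12 * L"
    and f_bounds: "\<And>k i. k \<in> K \<Longrightarrow> i \<in> A \<Longrightarrow> 0 \<le> f k i \<and> f k i \<le> 1 / 4"
begin

definition q :: real where "q = M / (2 * real (card A))"

lemma card_A_pos: "0 < real (card A)"
proof -
  have "0 < (2 :: real) ^ 18 * L" using L_ge_1 by simp
  then show ?thesis using card_A_ge by linarith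
qed

lemma q_times_card_A: "2 * q * real (card A) = M"
  using card_A_pos by (simp add: q_def)

lemma q_nonneg: "0 \<le> q"
  using M_ge L_ge_1 card_A_pos by (simp add: q_def)

lemma q_le_1: "q \<le> 1"
  using M_le L_ge_1 card_A_ge card_A_pos by (simp add: q_def field_simps)

abbreviation T_small :: "'k set" where "T_small \<equiv> sum_sublevel K f A (real (card A) / 2 ^ 13)"

abbreviation T_large :: "'k set" where "T_large \<equiv> sum_sublevel K f A (real (card A) / 2 ^ 7)"

abbreviation F_sub :: "'a set \<Rightarrow> 'k set" where "F_sub U \<equiv> sum_sublevel K f U L"

lemma expect_oversized_le: "subset_expect q A (\<lambda>U. of_bool (M < real (card U))) \<le> 1 / 8"
proof -
  have "3 / 4 * q * real (card A) - M / 2 = - (M / 8)"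
    using q_times_card_A by linarith
  then have "subset_expect q A (\<lambda>U. of_bool (M < real (card U))) \<le> exp (- (M / 8))"
    using subset_expect_card_gt_le[OF finite_A q_nonneg q_le_1, of M] by simp
  also have "\<dots> \<le> 1 / (1 + M / 8)"
    using M_ge L_ge_1 by (intro exp_minus_le_inverse_one_plus) simp
  also have "\<dots> \<le> 1 / 8"
    using M_ge L_ge_1 by (simp add: divide_simps)
  finally show ?thesis .
qed

lemma expect_spurious_le:
  "subset_expect q A (\<lambda>U. real (card (F_sub U - T_large))) \<le> 1 / 8"
proof -
  have term_le: "subset_expect q A (\<lambda>U. of_bool (k \<in> F_sub U - T_large)) \<le> exp (1 / 128 - 28 * L)"
    if "k \<in> K" for k
  proof (cases "k \<in> T_large")
    case True
    then show ?thesis using subset_expect_const[OF finite_A, of q 0] by simp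
  next
    case False
    then have large: "real (card A) / 2 ^ 7 < (\<Sum>i\<in>A. f k i)"
      using that by (simp add: sum_sublevel_def)
    have "subset_expect q A (\<lambda>U. of_bool (k \<in> F_sub U - T_large))
        = subset_expect q A (\<lambda>U. of_bool ((\<Sum>i\<in>U. f k i) \<le> L))"
      using that False by (intro subset_expect_cong) (simp add: sum_sublevel_def)
    also have "\<dots> \<le> exp (4 * L - 2 * q * (\<Sum>i\<in>A. f k i))"
      using f_bounds that by (intro subset_expect_sum_le_tail finite_A q_nonneg q_le_1) auto
    also have "\<dots> \<le> exp (1 / 128 - 28 * L)"
    proof -
      have "2 * q * (real (card A) / 2 ^ 7) \<le> 2 * q * (\<Sum>i\<in>A. f k i)"
        using large q_nonneg by (intro mult_left_mono) auto
      then show ?thesis using q_times_card_A M_ge by simp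
    qed
    finally show ?thesis .
  qed
  have "subset_expect q A (\<lambda>U. real (card (F_sub U - T_large)))
      = (\<Sum>k\<in>K. subset_expect q A (\<lambda>U. of_bool (k \<in> F_sub U - T_large)))"
    by (rule subset_expect_card[OF finite_K]) (auto simp: sum_sublevel_def)
  also have "\<dots> \<le> (\<Sum>k\<in>K. exp (1 / 128 - 28 * L))"
    by (intro sum_mono term_le)
  also have "\<dots> = real (card K) * exp (1 / 128 - 28 * L)"
    by simp
  also have "\<dots> \<le> exp L * exp (1 / 128 - 28 * L)"
    using card_K_le by simp
  also have "\<dots> \<le> exp (- (27 - 1 / 128))"
    using L_ge_1 by (simp add: mult_exp_exp)
  also have "\<dots> \<le> 1 / 8"
    using exp_minus_le_inverse_one_plus[of "27 - 1 / 128"] by simp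
  finally show ?thesis .
qed

lemma expect_lost_le:
  "subset_expect q A (\<lambda>U. real (card (T_small - F_sub U)))
     \<le> real (card T_small) / 3"
proof -
  have term_le: "subset_expect q A (\<lambda>U. of_bool (k \<in> T_small - F_sub U)) \<le> 1 / 3"
    if "k \<in> T_small" for k
  proof -
    have k: "k \<in> K" "(\<Sum>i\<in>A. f k i) \<le> real (card A) / 2 ^ 13"
      using that by (auto simp: sum_sublevel_def)
    have "subset_expect q A (\<lambda>U. of_bool (k \<in> T_small - F_sub U))
        = subset_expect q A (\<lambda>U. of_bool (L < (\<Sum>i\<in>U. f k i)))"
      using that by (intro subset_expect_cong) (auto simp: sum_sublevel_def)
    also have "\<dots> \<le> exp (8 * q * (\<Sum>i\<in>A. f k i) - 4 * L)"
      using f_bounds k by (intro subset_expect_sum_gt_tail finite_A q_nonneg q_le_1) auto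
    also have "\<dots> \<le> exp (- 2)"
    proof -
      have "8 * q * (\<Sum>i\<in>A. f k i) \<le> 8 * q * (real (card A) / 2 ^ 13)"
        using k q_nonneg by (intro mult_left_mono) auto
      also have "\<dots> = M / 2 ^ 11"
        using q_times_card_A by (simp add: mult_ac)
      finally show ?thesis using M_le L_ge_1 by simp
    qed
    also have "\<dots> \<le> 1 / 3"
      using exp_minus_le_inverse_one_plus[of 2] by simp
    finally show ?thesis .
  qed
  have "subset_expect q A (\<lambda>U. real (card (T_small - F_sub U)))
      = (\<Sum>k\<in>T_small. subset_expect q A (\<lambda>U. of_bool (k \<in> T_small - F_sub U)))"
    using finite_subset[OF sum_sublevel_subset finite_K] by (intro subset_expect_card) auto
  also have "\<dots> \<le> (\<Sum>k\<in>T_small. 1 / 3)"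
    by (intro sum_mono term_le)
  finally show ?thesis by simp
qed

definition failure_count :: "'a set \<Rightarrow> real" where
  "failure_count U = of_bool (M < real (card U)) + real (card (F_sub U - T_large))
     + 2 / real (card T_small) * real (card (T_small - F_sub U))"

lemma expect_failure_count_lt_1: "subset_expect q A failure_count < 1"
proof -
  let ?c = "2 / real (card T_small)"
  have "subset_expect q A failure_count = subset_expect q A (\<lambda>U. of_bool (M < real (card U)))
      + subset_expect q A (\<lambda>U. real (card (F_sub U - T_large)))
      + ?c * subset_expect q A (\<lambda>U. real (card (T_small - F_sub U)))"
    unfolding failure_count_def by (simp only: subset_expect_add subset_expect_cmult)
  moreover have "?c * subset_expect q A (\<lambda>U. real (card (T_small - F_sub U))) \<le> ?c * (real (card T_small) / 3)"
    using expect_lost_le by (intro mult_left_mono) auto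
  moreover have "?c * (real (card T_small) / 3) \<le> 2 / 3"
    by simp
  ultimately show ?thesis
    using expect_oversized_le expect_spurious_le by linarith
qed

lemma exists_sparse_subset:
  "\<exists>U\<subseteq>A. real (card U) \<le> M \<and> real (card T_small) \<le> 2 * real (card (F_sub U)) \<and> F_sub U \<subseteq> T_large"
proof -
  obtain U where U: "U \<subseteq> A" "failure_count U < 1"
    using exists_subset_lt_of_subset_expect_lt[OF finite_A q_nonneg q_le_1 expect_failure_count_lt_1] by blast
  have "0 \<le> 2 / real (card T_small) * real (card (T_small - F_sub U))" "0 \<le> (of_bool (M < real (card U)) :: real)"
    by simp_all
  then have "of_bool (M < real (card U)) < (1 :: real)" "real (card (F_sub U - T_large)) < 1"
    and few_lost: "2 / real (card T_small) * real (card (T_small - F_sub U)) < 1"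
    using U(2) unfolding failure_count_def by linarith+
  then have card_U: "\<not> M < real (card U)" and no_spurious: "card (F_sub U - T_large) = 0"
    by auto
  have finite_F: "finite (F_sub U)" and finite_T: "finite T_small"
    using finite_subset[OF sum_sublevel_subset finite_K] by auto
  have "2 * card (T_small - F_sub U) \<le> card T_small"
  proof (cases "T_small = {}")
    case False
    then have "0 < real (card T_small)"
      using finite_T by (simp add: card_gt_0_iff)
    then have "real (2 * card (T_small - F_sub U)) < real (card T_small)"
      using few_lost by (simp add: field_simps)
    then show ?thesis by linarith
  qed simp
  then have "card T_small \<le> 2 * card (F_sub U)"
    using diff_card_le_card_Diff[OF finite_F, of T_small] by linarith
  moreover have "F_sub U \<subseteq> T_large"
    using no_spurious finite_F by simp
  ultimately show ?thesis
    using U(1) card_U by auto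
qed

end

theorem lemma3p6:
  fixes p n :: nat and v :: "nat \<Rightarrow> nat"
  assumes "prime p" and "p > 3"
    and "real n \<ge> 2 ^ 18 * ln (real p)"
    and "\<forall>i\<in>{1..n}. v i < p"
  shows "\<exists>U \<subseteq> {1..n}.
           real (card U) \<le> real_of_int \<lfloor>2 ^ 12 * ln (real p)\<rfloor> \<and>
           real (card (Tset p {1..n} v (8 * (real (supp_size p {1..n} v) / 2 ^ 16))))
             \<le> 2 * real (card (Fset p U v)) \<and>
           Fset p U v \<subseteq> Tset p {1..n} v (real n / 2 ^ 7)"
proof -
  \<comment> \<open>Primality and reduced coordinates are never used: only \<open>near_dist x \<le> 1/2\<close> and \<open>p = exp (ln p)\<close> enter.\<close>
  define f where "f k i = (near_dist (real (k * v i) / real p))\<^sup>2" for k i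
  have Tset_eq: "Tset p I v s = sum_sublevel {..<p} f I s" for I s
    by (simp add: Tset_def sum_sublevel_def f_def)
  interpret sparsification "{1..n}" "{..<p}" f "ln (real p)" "real_of_int \<lfloor>2 ^ 12 * ln (real p)\<rfloor>"
  proof
    show "0 \<le> f k i \<and> f k i \<le> 1 / 4" for k i
      using near_dist_le_half power_mono[OF near_dist_le_half, of _ 2]
      by (simp add: f_def near_dist_def power_divide)
  qed (use assms(2,3) ln_ge_1_of_gt_3 in auto)
  obtain U where U: "U \<subseteq> {1..n}" "real (card U) \<le> real_of_int \<lfloor>2 ^ 12 * ln (real p)\<rfloor>"
    and many: "real (card (Tset p {1..n} v (real n / 2 ^ 13))) \<le> 2 * real (card (Fset p U v))"
    and sub: "Fset p U v \<subseteq> Tset p {1..n} v (real n / 2 ^ 7)"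
    using exists_sparse_subset by (auto simp: Fset_def Tset_eq)
  have "supp_size p {1..n} v \<le> n"
    unfolding supp_size_def by (metis Collect_subset card_atLeastAtMost card_mono diff_Suc_1 finite_atLeastAtMost)
  then have "Tset p {1..n} v (8 * (real (supp_size p {1..n} v) / 2 ^ 16)) \<subseteq> Tset p {1..n} v (real n / 2 ^ 13)"
    unfolding Tset_eq by (intro sum_sublevel_mono) simp
  then have "real (card (Tset p {1..n} v (8 * (real (supp_size p {1..n} v) / 2 ^ 16))))
      \<le> real (card (Tset p {1..n} v (real n / 2 ^ 13)))"
    by (intro of_nat_mono card_mono) (auto simp: Tset_def)
  with U many sub show ?thesis
    by (intro exI[of _ U] conjI) auto
qed

end
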